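(* For $r\in\{1,2\}$, $\mathcal{C}_r$ is a separable overpartition class with basis $\mathcal{G}_r=\bigcup_{m\ge1}\mathcal{G}_r(m)$. That is: - each $\mathcal{G}_r(m)$ is finite; - every overpartition in $\mathcal{C}_r$ with exactly $m\ge1$ parts can be written uniquely as $(b_1+\pi_1,\dots,b_m+\pi_m)$ with $(b_1,\dots,b_m)\in\mathcal{G}_r(m)$ and $\pi_1\ge\dots\ge\pi_m\ge0$ integers; - every such expression lies in $\mathcal{C}_r$. Consequently \[\sum_{\pi\in\mathcal{C}_r}q^{|\pi|}=1+\sum_{m\ge1}\frac{1}{(q;q)_m}\sum_{\pi\in\mathcal{G}_r(m)}q^{|\pi|}.\]
   Context: An overpartition is a partition in which the first occurrence of each part size may be overlined. Its parts are listed in non-increasing order with respect to $1<\bar1<2<\bar2<\cdots$. A part is of size $t$ if it is $t$ or $\bar t$. For an integer $b\ge0$, adding $b$ to a part of size $t$ gives the part of size $t+b$ with the same overline status. For $r\in\{1,2\}$, $\mathcal{C}_r$ is the set of overpartitions $(\pi_1,\dots,\pi_\ell)$ such that: - for each $1\le i<\ell$, the size of $\pi_i$ minus the size of $\pi_{i+1}$ is at least $1$, and at least $2$ if $\pi_i$ is non-overlined; - at most $r-1$ parts equal the non-overlined part $1$. For $m\ge1$, $\mathcal{G}(m)$ is the set of overpartitions $(\pi_1,\dots,\pi_m)$ such that for every $1\le i<m$, if $\pi_{i+1}$ has size $t$ then $\pi_i\in\{\overline{t+1},\,t+2\}$. Further: - $\mathcal{G}_2(m)$ is the subset of $\mathcal{G}(m)$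 with smallest part $\pi_m\in\{1,\bar1\}$; - $\mathcal{G}_1(m)$ is the subset with $\pi_m\in\{\bar1,2\}$. $(a;q)_n=\prod_{i=0}^{n-1}(1-aq^i)$. *)

theory Defs
  imports "HOL-Analysis.Analysis" "HOL-Computational_Algebra.Formal_Power_Series"
begin

text \<open>A part is a pair (size, overlined). The ordering 1 < 1bar < 2 < 2bar < ... is the
lexicographic order on (size, overlined) with False < True.\<close>

type_synonym part = "nat \<times> bool"

definition psize :: "part \<Rightarrow> nat" where "psize p = fst p"
definition povl :: "part \<Rightarrow> bool" where "povl p = snd p"

definition part_le :: "part \<Rightarrow> part \<Rightarrow> bool" where
  "part_le p q \<longleftrightarrow> psize p < psize q \<or> (psize p = psize q \<and> (povl p \<longrightarrow> povl q))"

text \<open>Overpartition: positive part sizes, listed non-increasingly w.r.t. the order above,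
and only the first occurrence of a size may be overlined (so equal parts are non-overlined).\<close>

definition is_overpartition :: "part list \<Rightarrow> bool" where
  "is_overpartition xs \<longleftrightarrow>
     (\<forall>p\<in>set xs. psize p \<ge> 1) \<and>
     sorted_wrt (\<lambda>a b. part_le b a \<and> (a = b \<longrightarrow> \<not> povl a)) xs"

definition weight :: "part list \<Rightarrow> nat" where
  "weight xs = (\<Sum>p\<leftarrow>xs. psize p)"

definition C :: "nat \<Rightarrow> part list set" where
  "C r = {xs. is_overpartition xs \<and>
      (\<forall>i. Suc i < length xs \<longrightarrow>
         psize (xs ! i) \<ge> psize (xs ! Suc i) + (if povl (xs ! i) then 1 else 2)) \<and>
      length (filter (\<lambda>p. p = (1, False)) xs) \<le> r - 1}"

definition G :: "nat \<Rightarrow> part list set" where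
  "G m = {xs. is_overpartition xs \<and> length xs = m \<and>
      (\<forall>i. Suc i < length xs \<longrightarrow>
         xs ! i \<in> {(psize (xs ! Suc i) + 1, True), (psize (xs ! Suc i) + 2, False)})}"

definition Gr :: "nat \<Rightarrow> nat \<Rightarrow> part list set" where
  "Gr r m = {xs \<in> G m. m \<ge> 1 \<and>
      (if r = 2 then last xs \<in> {(1, False), (1, True)} else last xs \<in> {(1, True), (2, False)})}"

definition add_part :: "part \<Rightarrow> nat \<Rightarrow> part" where
  "add_part p b = (psize p + b, povl p)"

definition add_parts :: "part list \<Rightarrow> nat list \<Rightarrow> part list" where
  "add_parts bs ps = map2 add_part bs ps"

definition qpoch :: "nat \<Rightarrow> rat fps" where
  "qpoch m = (\<Prod>i<m. 1 - fps_X ^ (i + 1))"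

definition gen_fun :: "part list set \<Rightarrow> rat fps" where
  "gen_fun S = Abs_fps (\<lambda>n. of_nat (card {xs \<in> S. weight xs = n}))"

end

theory Submission
  imports Defs
begin

text \<open>An overpartition in \<open>C r\<close> is a list of (size, overlined) pairs in which a part
marked \<open>ov\<close> exceeds the next one by at least \<open>gap ov\<close>, and whose last part is at least
\<open>min_last r ov\<close>. Making all these inequalities equalities produces, from the overline marks
alone, the least admissible sizes; this is exactly an element of \<open>Gr r m\<close>, and every element
of \<open>Gr r m\<close> arises this way from its own marks. The excesses of an overpartition over this
basis form a non-increasing sequence of non-negative integers, and conversely adding such a
sequence to a basis never violates a difference condition. Hence overpartitions with \<open>m\<close>
parts correspond bijectively to pairs of a basis and a partition into at most \<open>m\<close> parts,
whose generating function is \<open>1 / (q; q)\<^sub>m\<close>.\<close>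

section \<open>Difference conditions\<close>

definition gap :: "bool \<Rightarrow> nat" where
  "gap ov = (if ov then 1 else 2)"

text \<open>For \<open>r = 1\<close> the non-overlined part 1 is forbidden, so a last part must also respect
its own gap.\<close>

definition min_last :: "nat \<Rightarrow> bool \<Rightarrow> nat" where
  "min_last r ov = (if r = 2 then 1 else gap ov)"

definition spaced :: "part \<Rightarrow> part \<Rightarrow> bool" where
  "spaced a b \<longleftrightarrow> fst b + gap (snd a) \<le> fst a"

definition tight :: "part \<Rightarrow> part \<Rightarrow> bool" where
  "tight a b \<longleftrightarrow> fst a = fst b + gap (snd a)"

definition is_basis :: "nat \<Rightarrow> part list \<Rightarrow> bool" where
  "is_basis r bs \<longleftrightarrow> bs \<noteq> [] \<and> successively tight bs \<and> fst (last bs) = min_last r (snd (last bs))"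

lemma successively_spaced_if_tight: "successively tight xs \<Longrightarrow> successively spaced xs"
  by (erule successively_mono) (simp add: spaced_def tight_def)

lemma sorted_wrt_fst_if_spaced:
  "successively spaced xs \<Longrightarrow> sorted_wrt (\<lambda>a b. fst b < fst a) xs"
proof -
  assume "successively spaced xs"
  then have "successively (\<lambda>a b. fst b < fst a) xs"
    by (rule successively_mono) (auto simp: spaced_def gap_def split: if_splits)
  then show ?thesis
    by (subst (asm) successively_conv_sorted_wrt) (auto simp: transp_def)
qed

lemma is_overpartition_if_sorted_wrt_fst:
  "sorted_wrt (\<lambda>a b. fst b < fst a) xs \<Longrightarrow> \<forall>p\<in>set xs. 1 \<le> fst p \<Longrightarrow> is_overpartition xs"
  unfolding is_overpartition_def
  by (auto simp: psize_def part_le_def elim!: sorted_wrt_mono_rel[rotated])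

lemma length_filter_eq_le_1_if_sorted_wrt_fst:
  assumes "sorted_wrt (\<lambda>a b. fst b < fst a) (xs :: part list)"
  shows "length (filter (\<lambda>p. p = c) xs) \<le> 1"
proof -
  have "distinct xs"
    using assms by (induction xs) auto
  then have "length (filter (\<lambda>p. p = c) xs) = card ({p. p = c} \<inter> set xs)"
    by (rule distinct_length_filter)
  also have "\<dots> \<le> card {c}"
    by (rule card_mono) auto
  finally show ?thesis by simp
qed

lemma mem_C_iff:
  "xs \<in> C r \<longleftrightarrow> (\<forall>p\<in>set xs. 1 \<le> fst p) \<and> successively spaced xs \<and>
     length (filter (\<lambda>p. p = (1, False)) xs) \<le> r - 1"
proof -
  have chain: "successively spaced xs \<longleftrightarrow> (\<forall>i. Suc i < length xs \<longrightarrow>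
         psize (xs ! i) \<ge> psize (xs ! Suc i) + (if povl (xs ! i) then 1 else 2))"
    by (simp add: successively_conv_nth spaced_def gap_def psize_def povl_def)
  show ?thesis
    unfolding C_def mem_Collect_eq chain[symmetric]
    using is_overpartition_if_sorted_wrt_fst[OF sorted_wrt_fst_if_spaced]
    by (auto simp: is_overpartition_def psize_def)
qed

lemma is_basis_bounds:
  assumes "is_basis r bs" and "b \<in> set bs"
  shows "1 \<le> fst b \<and> fst b \<le> 2 * length bs \<and> (r \<noteq> 2 \<longrightarrow> gap (snd b) \<le> fst b)"
  using assms
proof (induction bs arbitrary: b)
  case (Cons a bs)
  show ?case
  proof (cases "bs = []")
    case True
    then show ?thesis using Cons.prems by (auto simp: is_basis_def min_last_def gap_def)
  next
    case False
    then have basis: "is_basis r bs"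
      using Cons.prems(1) by (auto simp: is_basis_def successively_Cons)
    have a: "fst a = fst (hd bs) + gap (snd a)"
      using Cons.prems(1) False by (auto simp: is_basis_def successively_Cons tight_def)
    have "1 \<le> fst (hd bs) \<and> fst (hd bs) \<le> 2 * length bs"
      using Cons.IH[OF basis] False by simp
    then have "1 \<le> fst a \<and> fst a \<le> 2 * length (a # bs) \<and> gap (snd a) \<le> fst a"
      using a by (auto simp: gap_def)
    then show ?thesis
      using Cons.IH[OF basis, of b] Cons.prems(2) by auto
  qed
qed (simp add: is_basis_def)

lemma mem_Gr_iff:
  assumes "r \<in> {1, 2}"
  shows "bs \<in> Gr r m \<longleftrightarrow> is_basis r bs \<and> length bs = m"
proof -
  have chain: "successively tight bs \<longleftrightarrow> (\<forall>i. Suc i < length bs \<longrightarrow>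
         bs ! i \<in> {(psize (bs ! Suc i) + 1, True), (psize (bs ! Suc i) + 2, False)})"
    unfolding successively_conv_nth tight_def gap_def psize_def
    by (intro all_cong1 imp_cong refl) (auto simp: prod_eq_iff)
  have last: "(if r = 2 then last bs \<in> {(1, False), (1, True)} else last bs \<in> {(1, True), (2, False)})
      \<longleftrightarrow> fst (last bs) = min_last r (snd (last bs))"
    using assms by (cases "last bs") (auto simp: min_last_def gap_def)
  have "is_basis r bs \<Longrightarrow> is_overpartition bs"
    using is_overpartition_if_sorted_wrt_fst[OF sorted_wrt_fst_if_spaced[OF successively_spaced_if_tight]]
      is_basis_bounds[of r bs] by (auto simp: is_basis_def)
  then show ?thesis
    unfolding Gr_def G_def is_basis_def mem_Collect_eq chain[symmetric] last
    by (auto simp: Suc_le_eq)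
qed

lemma finite_Gr:
  assumes "r \<in> {1, 2}"
  shows "finite (Gr r m)"
proof (rule finite_subset)
  show "Gr r m \<subseteq> {bs. set bs \<subseteq> {0..2*m} \<times> UNIV \<and> length bs = m}"
    using is_basis_bounds by (fastforce simp: mem_Gr_iff[OF assms])
  show "finite {bs. set bs \<subseteq> {0..2*m} \<times> (UNIV :: bool set) \<and> length bs = m}"
    by (rule finite_lists_length_eq) simp
qed

section \<open>The basis of an overpartition\<close>

fun basis_of :: "nat \<Rightarrow> part list \<Rightarrow> part list" where
  "basis_of r [] = []"
| "basis_of r [p] = [(min_last r (snd p), snd p)]"
| "basis_of r (p # q # rest) =
     (let bs = basis_of r (q # rest) in (fst (hd bs) + gap (snd p), snd p) # bs)"

lemma length_basis_of [simp]: "length (basis_of r xs) = length xs"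
  by (induction r xs rule: basis_of.induct) (auto simp: Let_def)

lemma basis_of_cong: "map snd xs = map snd ys \<Longrightarrow> basis_of r xs = basis_of r ys"
proof (induction r xs arbitrary: ys rule: basis_of.induct)
  case (2 r p)
  then show ?case by (cases ys) auto
next
  case (3 r p q rest)
  then obtain p' q' rest' where ys: "ys = p' # q' # rest'"
    by (cases ys; cases "tl ys") auto
  with "3.prems" have "basis_of r (q # rest) = basis_of r (q' # rest')" and "snd p = snd p'"
    using "3.IH" by auto
  then show ?case by (simp add: ys Let_def)
qed simp

lemma is_basis_basis_of: "xs \<noteq> [] \<Longrightarrow> is_basis r (basis_of r xs)"
proof (induction r xs rule: basis_of.induct)
  case (3 r p q rest)
  then show ?case
    by (cases "basis_of r (q # rest)") (auto simp: Let_def is_basis_def tight_def)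
qed (auto simp: is_basis_def)

lemma basis_of_is_basis: "is_basis r bs \<Longrightarrow> basis_of r bs = bs"
proof (induction r bs rule: basis_of.induct)
  case (3 r p q rest)
  then have "basis_of r (q # rest) = q # rest" and "fst p = fst q + gap (snd p)"
    by (auto simp: is_basis_def tight_def)
  then show ?case by (simp add: Let_def prod_eq_iff)
qed (auto simp: is_basis_def min_last_def prod_eq_iff)

section \<open>Adding a partition to a basis\<close>

lemma add_parts_Cons: "add_parts (b # bs) (p # ps) = add_part b p # add_parts bs ps"
  by (simp add: add_parts_def)

lemma length_add_parts: "length ps = length bs \<Longrightarrow> length (add_parts bs ps) = length bs"
  by (simp add: add_parts_def)

lemma map_snd_add_parts: "length ps = length bs \<Longrightarrow> map snd (add_parts bs ps) = map snd bs"
  by (induction bs arbitrary: ps)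
     (auto simp: add_parts_def add_part_def povl_def length_Suc_conv)

lemma add_parts_inject:
  "add_parts bs ps = add_parts bs ps' \<Longrightarrow> length ps = length bs \<Longrightarrow> length ps' = length bs \<Longrightarrow> ps = ps'"
proof (induction bs arbitrary: ps ps')
  case (Cons b bs)
  then obtain p ps1 p' ps1' where "ps = p # ps1" "ps' = p' # ps1'"
    by (auto simp: length_Suc_conv)
  with Cons show ?case by (auto simp: add_parts_Cons add_part_def psize_def povl_def)
qed simp

lemma weight_add_parts:
  "length ps = length bs \<Longrightarrow> weight (add_parts bs ps) = weight bs + sum_list ps"
proof (induction bs arbitrary: ps)
  case (Cons b bs)
  then obtain p ps1 where "ps = p # ps1" by (auto simp: length_Suc_conv)
  with Cons show ?case by (auto simp: add_parts_Cons add_part_def psize_def weight_def)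
qed (simp add: weight_def add_parts_def)

lemma mem_add_parts_dominates:
  "length ps = length bs \<Longrightarrow> x \<in> set (add_parts bs ps) \<Longrightarrow> \<exists>b\<in>set bs. fst b \<le> fst x \<and> snd x = snd b"
proof (induction bs arbitrary: ps)
  case (Cons b bs)
  then obtain p ps1 where "ps = p # ps1" by (auto simp: length_Suc_conv)
  with Cons show ?case by (auto simp: add_parts_Cons add_part_def psize_def povl_def)
qed (simp add: add_parts_def)

lemma successively_spaced_add_parts:
  "successively tight bs \<Longrightarrow> length ps = length bs \<Longrightarrow> sorted_wrt (\<ge>) ps \<Longrightarrow>
   successively spaced (add_parts bs ps)"
proof (induction bs arbitrary: ps rule: induct_list012)
  case (3 a b rest)
  then obtain p1 p2 ps' where ps: "ps = p1 # p2 # ps'" by (auto simp: length_Suc_conv)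
  with "3.prems" have "successively spaced (add_parts (b # rest) (p2 # ps'))"
    using "3.IH"(2) by simp
  moreover have "spaced (add_part a p1) (add_part b p2)"
    using "3.prems" ps by (simp add: tight_def spaced_def add_part_def psize_def povl_def)
  ultimately show ?case by (simp add: ps add_parts_Cons)
qed (auto simp: add_parts_def length_Suc_conv)

lemma add_parts_basis_of_exists:
  "xs \<noteq> [] \<Longrightarrow> successively spaced xs \<Longrightarrow> min_last r (snd (last xs)) \<le> fst (last xs) \<Longrightarrow>
   \<exists>ps. length ps = length xs \<and> sorted_wrt (\<ge>) ps \<and> xs = add_parts (basis_of r xs) ps"
proof (induction r xs rule: basis_of.induct)
  case (2 r p)
  then show ?case
    by (intro exI[of _ "[fst p - min_last r (snd p)]"])
       (auto simp: add_parts_def add_part_def psize_def povl_def)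
next
  case (3 r p q rest)
  then obtain ps where ps: "length ps = length (q # rest)" "sorted_wrt (\<ge>) ps"
    "q # rest = add_parts (basis_of r (q # rest)) ps"
    by auto
  obtain b bs where b: "basis_of r (q # rest) = b # bs"
    by (metis length_basis_of length_0_conv list.exhaust list.simps(3))
  obtain h hs where h: "ps = h # hs"
    using ps(1) by (cases ps) auto
  have q: "q = add_part b h"
    using ps(3) by (simp add: b h add_parts_Cons)
  have spaced: "fst q + gap (snd p) \<le> fst p"
    using "3.prems"(2) by (simp add: spaced_def)
  let ?excess = "fst p - (fst b + gap (snd p))"
  have "h \<le> ?excess"
    using spaced q by (simp add: add_part_def psize_def)
  then have "sorted_wrt (\<ge>) (?excess # ps)"
    using ps(2) by (auto simp: h)
  moreover have "add_part (fst b + gap (snd p), snd p) ?excess = p"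
    using spaced q by (simp add: add_part_def psize_def povl_def prod_eq_iff)
  moreover have "basis_of r (p # q # rest) = (fst b + gap (snd p), snd p) # b # bs"
    by (simp add: b Let_def)
  ultimately show ?case
    using ps(1,3) by (intro exI[of _ "?excess # ps"]) (simp add: h add_parts_Cons flip: b)
qed auto

lemma add_parts_mem_C:
  assumes r: "r \<in> {1, 2}" and bs: "bs \<in> Gr r m"
    and ps: "length ps = m" "sorted_wrt (\<ge>) ps"
  shows "add_parts bs ps \<in> C r"
proof -
  from bs have basis: "is_basis r bs" and len: "length ps = length bs"
    using ps(1) by (auto simp: mem_Gr_iff[OF r])
  have dominates: "\<exists>b\<in>set bs. fst b \<le> fst x \<and> snd x = snd b" if "x \<in> set (add_parts bs ps)" for x
    using mem_add_parts_dominates[OF len that] .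
  have spaced: "successively spaced (add_parts bs ps)"
    using successively_spaced_add_parts[OF _ len ps(2)] basis by (simp add: is_basis_def)
  have "length (filter (\<lambda>p. p = (1, False)) (add_parts bs ps)) \<le> r - 1"
  proof (cases "r = 2")
    case True
    then show ?thesis
      using length_filter_eq_le_1_if_sorted_wrt_fst[OF sorted_wrt_fst_if_spaced[OF spaced]] by simp
  next
    case False
    then have "(1, False) \<notin> set (add_parts bs ps)"
      using dominates is_basis_bounds[OF basis] by (fastforce simp: gap_def)
    then have "filter (\<lambda>p. p = (1, False)) (add_parts bs ps) = []"
      by (auto simp: filter_empty_conv)
    then show ?thesis
      by simp
  qed
  moreover have "\<forall>x\<in>set (add_parts bs ps). 1 \<le> fst x"
    using dominates is_basis_bounds[OF basis] by fastforce
  ultimately show ?thesis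
    using spaced by (simp add: mem_C_iff)
qed

lemma min_last_le_last_if_mem_C:
  assumes r: "r \<in> {1, 2}" and xs: "xs \<in> C r" "xs \<noteq> []"
  shows "min_last r (snd (last xs)) \<le> fst (last xs)"
proof -
  have pos: "1 \<le> fst (last xs)"
    using xs by (simp add: mem_C_iff)
  have "last xs \<noteq> (1, False)" if "r = 1"
    using xs that by (auto simp: mem_C_iff filter_empty_conv)
  then show ?thesis
    using r pos by (cases "last xs") (auto simp: min_last_def gap_def)
qed

lemma basis_eq_basis_of_if_add_parts:
  assumes r: "r \<in> {1, 2}" and "bs \<in> Gr r m" "length ps = m"
  shows "bs = basis_of r (add_parts bs ps)"
proof -
  have "is_basis r bs" "length ps = length bs"
    using assms by (auto simp: mem_Gr_iff[OF r])
  then show ?thesis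
    using basis_of_cong[OF map_snd_add_parts] basis_of_is_basis by metis
qed

lemma add_parts_decomposition_unique:
  assumes r: "r \<in> {1, 2}" and xs: "xs \<in> C r" "length xs = m" "1 \<le> m"
  shows "\<exists>!(bs, ps). bs \<in> Gr r m \<and> length ps = m \<and> sorted_wrt (\<ge>) ps \<and> xs = add_parts bs ps"
proof -
  have ne: "xs \<noteq> []"
    using xs by auto
  have "successively spaced xs"
    using xs(1) by (simp add: mem_C_iff)
  then obtain ps where ps: "length ps = m" "sorted_wrt (\<ge>) ps" "add_parts (basis_of r xs) ps = xs"
    using add_parts_basis_of_exists[OF ne _ min_last_le_last_if_mem_C[OF r xs(1) ne]] xs(2)
    by metis
  have basis: "basis_of r xs \<in> Gr r m"
    using is_basis_basis_of[OF ne] xs(2) by (simp add: mem_Gr_iff[OF r])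
  have unique: "bs' = basis_of r xs \<and> ps' = ps"
    if bs': "bs' \<in> Gr r m" and ps': "length ps' = m" and xs': "xs = add_parts bs' ps'" for bs' ps'
  proof
    show bs'_eq: "bs' = basis_of r xs"
      unfolding xs' by (rule basis_eq_basis_of_if_add_parts[OF r bs' ps'])
    have "add_parts (basis_of r xs) ps' = add_parts (basis_of r xs) ps"
      using xs' ps(3) bs'_eq by argo
    then show "ps' = ps"
      using add_parts_inject ps(1) ps' xs(2) by simp
  qed
  show ?thesis
  proof (rule ex1I[of _ "(basis_of r xs, ps)"])
    show "case (basis_of r xs, ps) of (bs, ps) \<Rightarrow>
        bs \<in> Gr r m \<and> length ps = m \<and> sorted_wrt (\<ge>) ps \<and> xs = add_parts bs ps"
      using basis ps by simp
  qed (use unique in blast)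
qed

lemma bij_betw_add_parts:
  assumes r: "r \<in> {1, 2}" and m: "1 \<le> m"
  shows "bij_betw (\<lambda>(bs, ps). add_parts bs ps)
           (SIGMA bs:Gr r m. {ps. length ps = m \<and> sorted_wrt (\<ge>) ps}) {xs \<in> C r. length xs = m}"
    (is "bij_betw ?f ?S ?T")
proof -
  have mem_T: "add_parts bs ps \<in> ?T" if "(bs, ps) \<in> ?S" for bs ps
  proof -
    have "length bs = m" "length ps = m" "sorted_wrt (\<ge>) ps" "bs \<in> Gr r m"
      using that by (auto simp: mem_Gr_iff[OF r])
    then show ?thesis
      using add_parts_mem_C[OF r] length_add_parts by simp
  qed
  have "inj_on ?f ?S"
  proof (rule inj_onI)
    fix x y
    assume "x \<in> ?S" "y \<in> ?S" "?f x = ?f y"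
    moreover obtain bs ps bs' ps' where "x = (bs, ps)" "y = (bs', ps')"
      by fastforce
    ultimately have S: "bs \<in> Gr r m" "length ps = m" "bs' \<in> Gr r m" "length ps' = m"
      and eq: "add_parts bs ps = add_parts bs' ps'"
      by auto
    have "bs = bs'"
      using basis_eq_basis_of_if_add_parts[OF r] S eq by metis
    moreover have "ps = ps'"
      using add_parts_inject eq S \<open>bs = bs'\<close> by (metis mem_Gr_iff[OF r])
    ultimately show "x = y"
      using \<open>x = _\<close> \<open>y = _\<close> by simp
  qed
  moreover have "?f ` ?S = ?T"
  proof
    show "?f ` ?S \<subseteq> ?T"
      using mem_T by auto
    show "?T \<subseteq> ?f ` ?S"
    proof
      fix xs assume "xs \<in> ?T"
      then obtain bs ps where "bs \<in> Gr r m" "length ps = m" "sorted_wrt (\<ge>) ps" "xs = add_parts bs ps"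
        using add_parts_decomposition_unique[OF r _ _ m] by blast
      then show "xs \<in> ?f ` ?S" by force
    qed
  qed
  ultimately show ?thesis
    by (rule bij_betw_imageI)
qed

section \<open>The inverse of \<open>qpoch\<close>\<close>

text \<open>Partitions of \<open>n\<close> into at most \<open>k\<close> parts, padded with zeros to length \<open>k\<close>.\<close>

definition padded_partitions :: "nat \<Rightarrow> nat \<Rightarrow> nat list set" where
  "padded_partitions k n = {ps. length ps = k \<and> sorted_wrt (\<ge>) ps \<and> sum_list ps = n}"

lemma finite_padded_partitions: "finite (padded_partitions k n)"
proof (rule finite_subset)
  show "padded_partitions k n \<subseteq> {ps. set ps \<subseteq> {0..n} \<and> length ps = k}"
    by (auto simp: padded_partitions_def member_le_sum_list)
  show "finite {ps. set ps \<subseteq> {0..n} \<and> length ps = k}"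
    by (rule finite_lists_length_eq) simp
qed

lemma padded_partitions_with_zero:
  "{ps \<in> padded_partitions (Suc k) n. 0 \<in> set ps} = (\<lambda>ps. ps @ [0]) ` padded_partitions k n"
proof
  show "{ps \<in> padded_partitions (Suc k) n. 0 \<in> set ps} \<subseteq> (\<lambda>ps. ps @ [0]) ` padded_partitions k n"
  proof clarify
    fix ps assume ps: "ps \<in> padded_partitions (Suc k) n" "0 \<in> set ps"
    then obtain ys z where ys: "ps = ys @ [z]"
      by (cases ps rule: rev_exhaust) (auto simp: padded_partitions_def)
    with ps have "z = 0" "ys \<in> padded_partitions k n"
      by (auto simp: padded_partitions_def sorted_wrt_append)
    then show "ps \<in> (\<lambda>ps. ps @ [0]) ` padded_partitions k n"
      using ys by blast
  qed
qed (auto simp: padded_partitions_def sorted_wrt_append)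

lemma padded_partitions_without_zero:
  "{ps \<in> padded_partitions (Suc k) n. 0 \<notin> set ps} =
     map Suc ` (if n < Suc k then {} else padded_partitions (Suc k) (n - Suc k))"
proof
  have sum_map_Suc: "sum_list (map Suc ps) = sum_list ps + length ps" for ps
    by (induction ps) auto
  show "{ps \<in> padded_partitions (Suc k) n. 0 \<notin> set ps} \<subseteq>
      map Suc ` (if n < Suc k then {} else padded_partitions (Suc k) (n - Suc k))"
  proof clarify
    fix ps assume ps: "ps \<in> padded_partitions (Suc k) n" "0 \<notin> set ps"
    define qs where "qs = map (\<lambda>x. x - 1) ps"
    have "ps = map Suc qs"
      unfolding qs_def using ps(2) by (induction ps) auto
    moreover have "qs \<in> (if n < Suc k then {} else padded_partitions (Suc k) (n - Suc k))"
      using ps(1) sum_map_Suc[of qs] by (auto simp: padded_partitions_def sorted_wrt_map \<open>ps = _\<close>)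
    ultimately show "ps \<in> map Suc ` (if n < Suc k then {} else padded_partitions (Suc k) (n - Suc k))"
      by blast
  qed
  show "map Suc ` (if n < Suc k then {} else padded_partitions (Suc k) (n - Suc k)) \<subseteq>
      {ps \<in> padded_partitions (Suc k) n. 0 \<notin> set ps}"
    by (auto simp: padded_partitions_def sorted_wrt_map sum_map_Suc split: if_splits)
qed

lemma card_padded_partitions_Suc:
  "card (padded_partitions (Suc k) n) =
     card (padded_partitions k n) + (if n < Suc k then 0 else card (padded_partitions (Suc k) (n - Suc k)))"
proof -
  let ?P = "padded_partitions (Suc k) n"
  have split: "?P = {ps \<in> ?P. 0 \<in> set ps} \<union> {ps \<in> ?P. 0 \<notin> set ps}"
    by blast
  have "card ?P = card {ps \<in> ?P. 0 \<in> set ps} + card {ps \<in> ?P. 0 \<notin> set ps}"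
    using finite_padded_partitions[of "Suc k" n] by (subst split, intro card_Un_disjoint) auto
  also have "card {ps \<in> ?P. 0 \<in> set ps} = card (padded_partitions k n)"
    unfolding padded_partitions_with_zero by (rule card_image) (auto simp: inj_on_def)
  also have "card {ps \<in> ?P. 0 \<notin> set ps} =
      (if n < Suc k then 0 else card (padded_partitions (Suc k) (n - Suc k)))"
    unfolding padded_partitions_without_zero by (subst card_image) (auto simp: inj_on_def)
  finally show ?thesis .
qed

definition padded_partitions_fps :: "nat \<Rightarrow> rat fps" where
  "padded_partitions_fps k = Abs_fps (\<lambda>n. of_nat (card (padded_partitions k n)))"

lemma padded_partitions_fps_0: "padded_partitions_fps 0 = 1"
proof (rule fps_ext)
  fix n
  have "padded_partitions 0 n = (if n = 0 then {[]} else {})"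
    by (auto simp: padded_partitions_def)
  then show "fps_nth (padded_partitions_fps 0) n = fps_nth 1 n"
    by (simp add: padded_partitions_fps_def)
qed

lemma padded_partitions_fps_Suc:
  "padded_partitions_fps (Suc k) * (1 - fps_X ^ Suc k) = padded_partitions_fps k"
proof -
  have rec: "padded_partitions_fps (Suc k) =
      padded_partitions_fps k + fps_X ^ Suc k * padded_partitions_fps (Suc k)"
  proof (rule fps_ext)
    fix n
    show "fps_nth (padded_partitions_fps (Suc k)) n =
        fps_nth (padded_partitions_fps k + fps_X ^ Suc k * padded_partitions_fps (Suc k)) n"
      unfolding padded_partitions_fps_def fps_add_nth fps_X_power_mult_nth fps_nth_Abs_fps
      by (subst card_padded_partitions_Suc) simp
  qed
  have "padded_partitions_fps (Suc k) * (1 - fps_X ^ Suc k) =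
      padded_partitions_fps (Suc k) - fps_X ^ Suc k * padded_partitions_fps (Suc k)"
    by (simp add: right_diff_distrib mult.commute)
  also have "\<dots> = padded_partitions_fps k"
    by (subst diff_eq_eq) (rule rec)
  finally show ?thesis .
qed

lemma inverse_qpoch: "inverse (qpoch k) = padded_partitions_fps k"
proof (rule fps_inverse_unique)
  show "qpoch k * padded_partitions_fps k = 1"
  proof (induction k)
    case 0
    then show ?case by (simp add: padded_partitions_fps_0 qpoch_def)
  next
    case (Suc k)
    have "qpoch (Suc k) = qpoch k * (1 - fps_X ^ Suc k)"
      by (simp add: qpoch_def)
    then have "qpoch (Suc k) * padded_partitions_fps (Suc k) =
        qpoch k * (padded_partitions_fps (Suc k) * (1 - fps_X ^ Suc k))"
      by (simp only: ac_simps)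
    then show ?case
      by (simp only: padded_partitions_fps_Suc Suc.IH)
  qed
qed

lemma fps_nth_inverse_qpoch_mult_X_power:
  "fps_nth (inverse (qpoch k) * fps_X ^ w) n =
     of_nat (card {ps. length ps = k \<and> sorted_wrt (\<ge>) ps \<and> w + sum_list ps = n})"
proof -
  have "{ps. length ps = k \<and> sorted_wrt (\<ge>) ps \<and> w + sum_list ps = n} =
      (if n < w then {} else padded_partitions k (n - w))"
    by (auto simp: padded_partitions_def)
  then show ?thesis
    by (simp add: inverse_qpoch fps_X_power_mult_right_nth padded_partitions_fps_def)
qed

section \<open>The generating function\<close>

lemma length_le_weight: "\<forall>p\<in>set xs. 1 \<le> fst p \<Longrightarrow> length xs \<le> weight xs"
  by (induction xs) (auto simp: weight_def psize_def)

lemma fst_le_weight: "p \<in> set xs \<Longrightarrow> fst p \<le> weight xs"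
  unfolding weight_def psize_def by (simp add: member_le_sum_list)

lemma finite_C_weight: "finite {xs \<in> C r. weight xs = n}"
proof (rule finite_subset)
  show "{xs \<in> C r. weight xs = n} \<subseteq> {xs. set xs \<subseteq> {0..n} \<times> UNIV \<and> length xs \<le> n}"
    using length_le_weight fst_le_weight by (fastforce simp: mem_C_iff)
  show "finite {xs. set xs \<subseteq> {0..n} \<times> (UNIV :: bool set) \<and> length xs \<le> n}"
    by (rule finite_lists_length_le) simp
qed

lemma card_C_length_weight:
  assumes r: "r \<in> {1, 2}" and m: "1 \<le> m"
  shows "card {xs \<in> C r. length xs = m \<and> weight xs = n} =
    (\<Sum>bs\<in>Gr r m. card {ps. length ps = m \<and> sorted_wrt (\<ge>) ps \<and> weight bs + sum_list ps = n})"
proof -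
  let ?f = "\<lambda>(bs, ps). add_parts bs ps"
  let ?S = "SIGMA bs:Gr r m. {ps. length ps = m \<and> sorted_wrt (\<ge>) ps}"
  let ?Sn = "SIGMA bs:Gr r m. {ps. length ps = m \<and> sorted_wrt (\<ge>) ps \<and> weight bs + sum_list ps = n}"
  have "{x \<in> ?S. weight (?f x) = n} = ?Sn"
    using weight_add_parts by (auto simp: mem_Gr_iff[OF r])
  moreover have "bij_betw ?f {x \<in> ?S. weight (?f x) = n} {xs \<in> {xs \<in> C r. length xs = m}. weight xs = n}"
  proof (rule bij_betw_subset[OF bij_betw_add_parts[OF r m]])
    have "?f ` {x \<in> ?S. weight (?f x) = n} = {xs \<in> ?f ` ?S. weight xs = n}"
      by blast
    then show "?f ` {x \<in> ?S. weight (?f x) = n} = {xs \<in> {xs \<in> C r. length xs = m}. weight xs = n}"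
      using bij_betw_add_parts[OF r m] by (simp add: bij_betw_def)
  qed auto
  ultimately have "card {xs \<in> C r. length xs = m \<and> weight xs = n} = card ?Sn"
    by (simp add: bij_betw_same_card conj_assoc)
  also have "\<dots> = (\<Sum>bs\<in>Gr r m. card {ps. length ps = m \<and> sorted_wrt (\<ge>) ps \<and> weight bs + sum_list ps = n})"
  proof (rule card_SigmaI)
    show "finite (Gr r m)"
      by (rule finite_Gr[OF r])
    show "\<forall>bs\<in>Gr r m. finite {ps. length ps = m \<and> sorted_wrt (\<ge>) ps \<and> weight bs + sum_list ps = n}"
    proof
      fix bs
      have "{ps. length ps = m \<and> sorted_wrt (\<ge>) ps \<and> weight bs + sum_list ps = n} \<subseteq>
          padded_partitions m (n - weight bs)"
        by (auto simp: padded_partitions_def)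
      then show "finite {ps. length ps = m \<and> sorted_wrt (\<ge>) ps \<and> weight bs + sum_list ps = n}"
        using finite_padded_partitions by (rule finite_subset)
    qed
  qed
  finally show ?thesis .
qed

lemma card_C_weight_by_length:
  assumes "n \<le> N"
  shows "card {xs \<in> C r. weight xs = n} = (\<Sum>m\<le>N. card {xs \<in> C r. length xs = m \<and> weight xs = n})"
proof -
  have "{xs \<in> C r. weight xs = n} = (\<Union>m\<le>N. {xs \<in> C r. length xs = m \<and> weight xs = n})"
    using length_le_weight assms by (fastforce simp: mem_C_iff)
  then show ?thesis
    by (simp only:) (rule card_UN_disjoint, auto intro: finite_subset[OF _ finite_C_weight[of r n]])
qed

lemma card_C_length_0_weight: "card {xs \<in> C r. length xs = 0 \<and> weight xs = n} = (if n = 0 then 1 else 0)"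
proof -
  have "[] \<in> C r"
    by (simp add: mem_C_iff)
  then have "{xs \<in> C r. length xs = 0 \<and> weight xs = n} = (if n = 0 then {[]} else {})"
    by (auto simp: weight_def)
  then show ?thesis by simp
qed

lemma fps_nth_C_length:
  assumes r: "r \<in> {1, 2}" and m: "1 \<le> m"
  shows "fps_nth (inverse (qpoch m) * (\<Sum>bs\<in>Gr r m. fps_X ^ weight bs)) n =
    of_nat (card {xs \<in> C r. length xs = m \<and> weight xs = n})"
  by (simp add: sum_distrib_left fps_sum_nth fps_nth_inverse_qpoch_mult_X_power
      card_C_length_weight[OF r m])

lemma gen_fun_C_sums:
  assumes r: "r \<in> {1, 2}"
  shows "(\<lambda>m. inverse (qpoch (Suc m)) * (\<Sum>bs\<in>Gr r (Suc m). fps_X ^ weight bs)) sums (gen_fun (C r) - 1)"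
  unfolding sums_def
proof (rule tendsto_fpsI)
  fix n
  have "fps_nth (\<Sum>m<N. inverse (qpoch (Suc m)) * (\<Sum>bs\<in>Gr r (Suc m). fps_X ^ weight bs)) n =
      fps_nth (gen_fun (C r) - 1) n" if "n \<le> N" for N
  proof -
    have "fps_nth (\<Sum>m<N. inverse (qpoch (Suc m)) * (\<Sum>bs\<in>Gr r (Suc m). fps_X ^ weight bs)) n =
        of_nat (\<Sum>m<N. card {xs \<in> C r. length xs = Suc m \<and> weight xs = n})"
      by (simp add: fps_sum_nth fps_nth_C_length[OF r])
    also have "\<dots> = of_nat (card {xs \<in> C r. weight xs = n}) - (if n = 0 then 1 else 0)"
      unfolding card_C_weight_by_length[OF that, of r] lessThan_Suc_atMost[symmetric]
        sum.lessThan_Suc_shift card_C_length_0_weight by simp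
    also have "\<dots> = fps_nth (gen_fun (C r) - 1) n"
      by (simp add: gen_fun_def)
    finally show ?thesis .
  qed
  then show "\<forall>\<^sub>F N in sequentially.
      fps_nth (\<Sum>m<N. inverse (qpoch (Suc m)) * (\<Sum>bs\<in>Gr r (Suc m). fps_X ^ weight bs)) n =
      fps_nth (gen_fun (C r) - 1) n"
    unfolding eventually_sequentially by blast
qed

theorem mainTheorem11:
  fixes r :: nat
  assumes "r \<in> {1, 2}"
  shows "(\<forall>m\<ge>1. finite (Gr r m)) \<and>
    (\<forall>m\<ge>1. \<forall>xs\<in>C r. length xs = m \<longrightarrow>
       (\<exists>!(bs, ps). bs \<in> Gr r m \<and> length ps = m \<and> sorted_wrt (\<ge>) ps \<and>
          xs = add_parts bs ps)) \<and>
    (\<forall>m\<ge>1. \<forall>bs\<in>Gr r m. \<forall>ps. length ps = m \<and> sorted_wrt (\<ge>) ps \<longrightarrow>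
       add_parts bs ps \<in> C r) \<and>
    summable (\<lambda>m. inverse (qpoch (Suc m)) *
                   (\<Sum>xs\<in>Gr r (Suc m). fps_X ^ weight xs)) \<and>
    gen_fun (C r) = 1 + (\<Sum>m. inverse (qpoch (Suc m)) *
                   (\<Sum>xs\<in>Gr r (Suc m). fps_X ^ weight xs))"
proof -
  note sums = gen_fun_C_sums[OF assms]
  show ?thesis
  proof (intro conjI allI impI ballI)
    show "finite (Gr r m)" for m
      by (rule finite_Gr[OF assms])
    show "\<exists>!(bs, ps). bs \<in> Gr r m \<and> length ps = m \<and> sorted_wrt (\<ge>) ps \<and> xs = add_parts bs ps"
      if "1 \<le> m" "xs \<in> C r" "length xs = m" for m xs
      using add_parts_decomposition_unique[OF assms] that by blast
    show "add_parts bs ps \<in> C r"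
      if "bs \<in> Gr r m" "length ps = m \<and> sorted_wrt (\<ge>) ps" for m bs ps
      using add_parts_mem_C[OF assms] that by blast
    show "summable (\<lambda>m. inverse (qpoch (Suc m)) * (\<Sum>xs\<in>Gr r (Suc m). fps_X ^ weight xs))"
      by (rule sums_summable[OF sums])
    show "gen_fun (C r) = 1 + (\<Sum>m. inverse (qpoch (Suc m)) * (\<Sum>xs\<in>Gr r (Suc m). fps_X ^ weight xs))"
      using sums_unique[OF sums] by (metis add.commute diff_add_cancel)
  qed
qed

end
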